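(* Let $\mathcal G$ be a Lie superalgebra over a field of characteristic zero, with $\mathcal U_{1-}$, $\bullet$, the extended bracket $[\cdot,\cdot]$ and the notation $[A,k]$ as described below. Let $A,B\in\mathcal U_{1-}$ be homogeneous operators and $n\ge1$ an integer. Then $$[[A,B],n]=\sum_{k=0}^n\binom{n}{k}\big[[A,k],[B,n-k]\big]$$ and $$[A,n]\bullet B=\sum_{i+j=n-1}\big[[[A,i],B],j\big]+[A\bullet B,n]=\sum_{i+j=n-1}\binom{n}{j+1}\big[[A,i],[B,j]\big]+[A\bullet B,n],$$ where the sums run over all non-negative integers $i,j$ with $i+j=n-1$.
   Context: Set $\mathcal U_1=\mathcal G$ with its $\mathbb Z_2$-grading. For $p\ge1$ define recursively $\mathcal U_{-p+1}=\mathrm{Hom}(\mathcal U_1,\mathcal U_{-p+2})$, $\mathbb Z_2$-graded by declaring $A$ even (resp. odd) if it preserves (resp. reverses) parity; $|u|$ is the parity of a homogeneous element. Elements of $\mathcal U_{1-p}$ are operators of order $p$ (elements of $\mathcal G$ have order $0$); $\mathcal U_{1-}=\bigoplus_{p\ge0}\mathcal U_{1-p}$. Define $\circ$: $A\circ y=A(y)$, $y\circ A=0$ for $A$ of order $\ge1$, $y\in\mathcal U_1$; for $A,B$ of orders $\ge1$, recursively $(A\circ B)(x)=A\circ B(x)+(-1)^{|B||x|}A(x)\circ B$. Define $\bullet$: $A_p\bullet B_q=\frac{p!q!}{(p+q-1)!}A_p\circ B_q$ for orders $p,q\ge1$; $A_p\bullet x=pA_p(x)$, $x\bullet A_p=0$,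 $x\bullet y=0$ for $x,y\in\mathcal U_1$. The bracket of $\mathcal G$ extends to $\mathcal U_{1-}$: on $\mathcal G$ it is the given bracket, and for operators $A,B$ of orders $p,q$ with $p+q\ge1$, $[A,B]$ is the operator of order $p+q$ defined recursively by $[A,B]\bullet x=[A,B\bullet x]+(-1)^{|x||B|}[A\bullet x,B]$ for all $x\in\mathcal G$. $1$ denotes the identity map of $\mathcal G$ (an even operator of order $1$); for an operator $A$, $[A,0]=A$ and $[A,k]=[[A,k-1],1]$ for $k\ge1$. *)

theory Defs
  imports Complex_Main
begin

text \<open>The Lie superalgebra G is the whole type 'g, a vector space over the field 'k
  (scalar multiplication sc), Z2-graded as G = G0 (+) G1 (G0 even, G1 odd part),
  with bracket brG.  Parities are booleans: False = even, True = odd.\<close>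

definition gpart :: "'g set \<Rightarrow> 'g set \<Rightarrow> bool \<Rightarrow> 'g set" where
  "gpart G0 G1 a = (if a then G1 else G0)"

definition lie_superalgebra ::
  "('k::field_char_0 \<Rightarrow> 'g::ab_group_add \<Rightarrow> 'g) \<Rightarrow> 'g set \<Rightarrow> 'g set \<Rightarrow> ('g \<Rightarrow> 'g \<Rightarrow> 'g) \<Rightarrow> bool" where
  "lie_superalgebra sc G0 G1 brG \<longleftrightarrow>
     vector_space sc \<and>
     (\<forall>S\<in>{G0, G1}. 0 \<in> S \<and> (\<forall>x\<in>S. \<forall>y\<in>S. x + y \<in> S) \<and> (\<forall>c. \<forall>x\<in>S. sc c x \<in> S)) \<and>
     (\<forall>x. \<exists>a\<in>G0. \<exists>c\<in>G1. x = a + c) \<and> G0 \<inter> G1 = {0} \<and>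
     (\<forall>x. Vector_Spaces.linear sc sc (brG x)) \<and>
     (\<forall>y. Vector_Spaces.linear sc sc (\<lambda>x. brG x y)) \<and>
     (\<forall>a c x y. x \<in> gpart G0 G1 a \<longrightarrow> y \<in> gpart G0 G1 c \<longrightarrow>
        brG x y \<in> gpart G0 G1 (a \<noteq> c)) \<and>
     (\<forall>a c x y. x \<in> gpart G0 G1 a \<longrightarrow> y \<in> gpart G0 G1 c \<longrightarrow>
        brG x y = (if a \<and> c then brG y x else - brG y x)) \<and>
     (\<forall>a c x y z. x \<in> gpart G0 G1 a \<longrightarrow> y \<in> gpart G0 G1 c \<longrightarrow>
        brG x (brG y z) = brG (brG x y) z + (if a \<and> c then - brG y (brG x z) else brG y (brG x z)))"

text \<open>Projections onto the even and odd parts, and the sign twist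
  x \<mapsto> (-1)^(b|x|) x extended linearly.\<close>

definition pr0 :: "'g set \<Rightarrow> 'g set \<Rightarrow> 'g::ab_group_add \<Rightarrow> 'g" where
  "pr0 G0 G1 x = (THE a. a \<in> G0 \<and> x - a \<in> G1)"

definition pr1 :: "'g set \<Rightarrow> 'g set \<Rightarrow> 'g::ab_group_add \<Rightarrow> 'g" where
  "pr1 G0 G1 x = x - pr0 G0 G1 x"

definition sgnx :: "'g set \<Rightarrow> 'g set \<Rightarrow> bool \<Rightarrow> 'g::ab_group_add \<Rightarrow> 'g" where
  "sgnx G0 G1 b x = (if b then pr0 G0 G1 x - pr1 G0 G1 x else x)"

text \<open>An operator of order p (element of U_{1-p}, i.e. the curried
  Hom(G, Hom(G, ... Hom(G,G)))) is represented uncurried as a function on lists: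
  A(x1)(x2)...(xp) = f [x1,...,xp]; it is zero on lists of length different from p.
  An element y of G is the order-0 operator (elem y).\<close>

definition elem :: "'g::zero \<Rightarrow> 'g list \<Rightarrow> 'g" where
  "elem y = (\<lambda>xs. if xs = [] then y else 0)"

definition one_op :: "'g::zero list \<Rightarrow> 'g" where
  "one_op = (\<lambda>xs. case xs of [x] \<Rightarrow> x | _ \<Rightarrow> 0)"

definition is_hom_op ::
  "('k::field \<Rightarrow> 'g::ab_group_add \<Rightarrow> 'g) \<Rightarrow> 'g set \<Rightarrow> 'g set \<Rightarrow> nat \<Rightarrow> bool \<Rightarrow> ('g list \<Rightarrow> 'g) \<Rightarrow> bool" where
  "is_hom_op sc G0 G1 p b f \<longleftrightarrow>
     (\<forall>xs. length xs \<noteq> p \<longrightarrow> f xs = 0) \<and>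
     (\<forall>as bs. length as + length bs + 1 = p \<longrightarrow>
        Vector_Spaces.linear sc sc (\<lambda>x. f (as @ x # bs))) \<and>
     (\<forall>xs ps. length xs = p \<longrightarrow> length ps = p \<longrightarrow>
        (\<forall>i<p. xs ! i \<in> gpart G0 G1 (ps ! i)) \<longrightarrow>
        f xs \<in> gpart G0 G1 (foldr (\<lambda>a c. a \<noteq> c) ps b))"

text \<open>Composition A \<circ> B, A of order p, B of order q and parity b:
  A \<circ> y = A(y) for y in G; y \<circ> A = 0; for p, q \<ge> 1,
  (A \<circ> B)(x) = A \<circ> B(x) + (-1)^(|B||x|) A(x) \<circ> B (extended linearly in x).\<close>
fun comp_op ::
  "'g set \<Rightarrow> 'g set \<Rightarrow> nat \<Rightarrow> nat \<Rightarrow> bool \<Rightarrow> ('g::ab_group_add list \<Rightarrow> 'g) \<Rightarrow> ('g list \<Rightarrow> 'g) \<Rightarrow> 'g list \<Rightarrow> 'g" where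
  "comp_op G0 G1 p q b f g [] =
     (if p = 0 then 0 else if q = 0 then f [g []] else 0)"
| "comp_op G0 G1 p q b f g (x # xs) =
     (if p = 0 then 0 else if q = 0 then f (g [] # x # xs) else
        comp_op G0 G1 p (q - 1) b f (\<lambda>ys. g (pr0 G0 G1 x # ys)) xs
      + comp_op G0 G1 p (q - 1) (\<not> b) f (\<lambda>ys. g (pr1 G0 G1 x # ys)) xs
      + comp_op G0 G1 (p - 1) q b (\<lambda>ys. f (sgnx G0 G1 b x # ys)) g xs)"

text \<open>The product A_p \<bullet> B_q = p!q!/(p+q-1)! A_p \<circ> B_q (q = 0 gives A_p \<bullet> x = p A_p(x));
  x \<bullet> anything = 0.\<close>
definition dot_op ::
  "('k::field_char_0 \<Rightarrow> 'g::ab_group_add \<Rightarrow> 'g) \<Rightarrow> 'g set \<Rightarrow> 'g set \<Rightarrow> nat \<Rightarrow> nat \<Rightarrow> bool \<Rightarrow>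
     ('g list \<Rightarrow> 'g) \<Rightarrow> ('g list \<Rightarrow> 'g) \<Rightarrow> 'g list \<Rightarrow> 'g" where
  "dot_op sc G0 G1 p q b f g =
     (if p = 0 then (\<lambda>_. 0)
      else (\<lambda>xs. sc (fact p * fact q / fact (p + q - 1)) (comp_op G0 G1 p q b f g xs)))"

text \<open>The extended bracket [A,B], A of order p, B of order q and parity b.
  For p + q = 0 it is the bracket of G; for p + q \<ge> 1 it is determined by
  [A,B] \<bullet> x = [A, B \<bullet> x] + (-1)^(|x||B|) [A \<bullet> x, B], where [A,B] \<bullet> x = (p+q)[A,B](x).
  Terms B \<bullet> x with q = 0 and A \<bullet> x with p = 0 vanish and are omitted.\<close>
fun ext_br ::
  "('k::field_char_0 \<Rightarrow> 'g::ab_group_add \<Rightarrow> 'g) \<Rightarrow> 'g set \<Rightarrow> 'g set \<Rightarrow> ('g \<Rightarrow> 'g \<Rightarrow> 'g) \<Rightarrow>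
     nat \<Rightarrow> nat \<Rightarrow> bool \<Rightarrow> ('g list \<Rightarrow> 'g) \<Rightarrow> ('g list \<Rightarrow> 'g) \<Rightarrow> 'g list \<Rightarrow> 'g" where
  "ext_br sc G0 G1 brG p q b f g [] =
     (if p + q = 0 then brG (f []) (g []) else 0)"
| "ext_br sc G0 G1 brG p q b f g (x # xs) =
     (if p + q = 0 then 0 else
       sc (inverse (of_nat (p + q)))
        ((if q = 0 then 0 else
            ext_br sc G0 G1 brG p (q - 1) b f
              (dot_op sc G0 G1 q 0 False g (elem (pr0 G0 G1 x))) xs
          + ext_br sc G0 G1 brG p (q - 1) (\<not> b) f
              (dot_op sc G0 G1 q 0 False g (elem (pr1 G0 G1 x))) xs)
         + (if p = 0 then 0 else
            ext_br sc G0 G1 brG (p - 1) q b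
              (dot_op sc G0 G1 p 0 False f (elem (sgnx G0 G1 b x))) g xs)))"

text \<open>[A,k] for A of order p: [A,0] = A, [A,k] = [[A,k-1],1].\<close>
fun ad_one ::
  "('k::field_char_0 \<Rightarrow> 'g::ab_group_add \<Rightarrow> 'g) \<Rightarrow> 'g set \<Rightarrow> 'g set \<Rightarrow> ('g \<Rightarrow> 'g \<Rightarrow> 'g) \<Rightarrow>
     nat \<Rightarrow> ('g list \<Rightarrow> 'g) \<Rightarrow> nat \<Rightarrow> 'g list \<Rightarrow> 'g" where
  "ad_one sc G0 G1 brG p f 0 = f"
| "ad_one sc G0 G1 brG p f (Suc k) =
     ext_br sc G0 G1 brG (p + k) 1 False (ad_one sc G0 G1 brG p f k) one_op"

end

theory Submission
  imports Defs
begin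

text \<open>
  Everything follows by induction on the number of arguments from the recursion that defines
  the bracket, [A,B] \<bullet> y = [A, B \<bullet> y] + (-1)^(|y||B|) [A \<bullet> y, B], which by
  multilinearity only has to be considered for homogeneous y.  In this way one gets the Jacobi
  identity [[A,B],z] = [A,[B,z]] + (-1)^(|B||z|) [[A,z],B] for z in G, and from it that
  [-,1] is an even derivation: [[A,B],1] = [A,[B,1]] + [[A,1],B].  Iterating this gives the
  Leibniz formula for [[A,B],n].  Likewise [A,1] \<bullet> B = [A,B] + [A \<bullet> B, 1], whose iteration
  expands [A,n] \<bullet> B; the binomial form of this expansion follows by comparing both sides'
  recursions in n with Pascal's rule.
\<close>

definition neg_if :: "bool \<Rightarrow> 'a::group_add \<Rightarrow> 'a" where
  "neg_if t v = (if t then - v else v)"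

lemma neg_if_simps [simp]:
  "neg_if False v = v" "neg_if True v = - v" "neg_if t 0 = 0"
  by (simp_all add: neg_if_def)

locale lie_super =
  fixes sc :: "'k::field_char_0 \<Rightarrow> 'g::ab_group_add \<Rightarrow> 'g"
    and G0 G1 :: "'g set" and brG :: "'g \<Rightarrow> 'g \<Rightarrow> 'g"
  assumes lie_superalgebra: "lie_superalgebra sc G0 G1 brG"
begin

sublocale V: vector_space sc
  using lie_superalgebra by (simp add: lie_superalgebra_def)

lemma scale_neg_if: "sc a (neg_if t v) = neg_if t (sc a v)"
  by (cases t) simp_all

lemma scale_add3_split:
  "sc i (a1 + a2 + (b1 + b2) + (c1 + c2)) = sc i (a1 + b1 + c1) + sc i (a2 + b2 + c2)"
  by (simp only: V.scale_right_distrib[symmetric]) (simp add: ac_simps)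

abbreviation "G \<equiv> gpart G0 G1"
abbreviation "even_part \<equiv> pr0 G0 G1"
abbreviation "odd_part \<equiv> pr1 G0 G1"
abbreviation "twist \<equiv> sgnx G0 G1"

lemma G_False [simp]: "G False = G0" and G_True [simp]: "G True = G1"
  by (simp_all add: gpart_def)

lemma G0_zero [simp]: "0 \<in> G0" and G1_zero [simp]: "0 \<in> G1"
  and G0_add: "x \<in> G0 \<Longrightarrow> y \<in> G0 \<Longrightarrow> x + y \<in> G0"
  and G1_add: "x \<in> G1 \<Longrightarrow> y \<in> G1 \<Longrightarrow> x + y \<in> G1"
  and G0_scale: "x \<in> G0 \<Longrightarrow> sc a x \<in> G0"
  and G1_scale: "x \<in> G1 \<Longrightarrow> sc a x \<in> G1"
  and G_decomp: "\<exists>a\<in>G0. \<exists>c\<in>G1. z = a + c"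
  and G0_Int_G1: "G0 \<inter> G1 = {0}"
  using lie_superalgebra unfolding lie_superalgebra_def by auto

lemma G_zero [simp]: "0 \<in> G c"
  and G_add: "x \<in> G c \<Longrightarrow> y \<in> G c \<Longrightarrow> x + y \<in> G c"
  and G_scale: "x \<in> G c \<Longrightarrow> sc a x \<in> G c"
  by (cases c; simp add: G0_zero G1_zero G0_add G1_add G0_scale G1_scale)+

lemma G_neg: "x \<in> G c \<Longrightarrow> - x \<in> G c"
  using G_scale[of x c "-1"] by simp

lemma G_diff: "x \<in> G c \<Longrightarrow> y \<in> G c \<Longrightarrow> x - y \<in> G c"
  using G_add[of x c "- y"] G_neg by simp

lemma G_neg_if: "x \<in> G c \<Longrightarrow> neg_if t x \<in> G c"
  by (cases t) (simp_all add: G_neg)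

lemma bracket_linear_left: "Vector_Spaces.linear sc sc (\<lambda>y. brG y x)"
  and bracket_linear_right: "Vector_Spaces.linear sc sc (brG x)"
  using lie_superalgebra unfolding lie_superalgebra_def by blast+

lemma bracket_add_left: "brG (y + z) x = brG y x + brG z x"
  and bracket_scale_left: "brG (sc c y) x = sc c (brG y x)"
  using bracket_linear_left[of x] by (simp_all add: linear_iff_module_hom module_hom_iff)

lemma bracket_add_right: "brG x (y + z) = brG x y + brG x z"
  and bracket_scale_right: "brG x (sc c y) = sc c (brG x y)"
  using bracket_linear_right[of x] by (simp_all add: linear_iff_module_hom module_hom_iff)

lemma bracket_zero_left [simp]: "brG 0 x = 0" and bracket_zero_right [simp]: "brG x 0 = 0"
  using bracket_scale_left[of 0 0 x] bracket_scale_right[of x 0 0] by simp_all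

lemma bracket_parity: "x \<in> G a \<Longrightarrow> y \<in> G c \<Longrightarrow> brG x y \<in> G (a \<noteq> c)"
  and bracket_antisym:
    "x \<in> G a \<Longrightarrow> y \<in> G c \<Longrightarrow> brG x y = (if a \<and> c then brG y x else - brG y x)"
  and bracket_jacobi: "x \<in> G a \<Longrightarrow> y \<in> G c \<Longrightarrow>
    brG x (brG y z) = brG (brG x y) z + (if a \<and> c then - brG y (brG x z) else brG y (brG x z))"
  using lie_superalgebra unfolding lie_superalgebra_def by blast+

lemma bracket_jacobi_right:
  assumes y: "y \<in> G b" and z: "z \<in> G c"
  shows "brG (brG a y) z = brG a (brG y z) + neg_if (b \<and> c) (brG (brG a z) y)"
proof -
  have homogeneous: "brG (brG a' y) z = brG a' (brG y z) + neg_if (b \<and> c) (brG (brG a' z) y)"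
    if a': "a' \<in> G d" for a' d
    using bracket_jacobi[OF a' y, of z] bracket_antisym[OF bracket_parity[OF a' z] y]
    by (cases b; cases c; cases d) (auto simp: algebra_simps)
  obtain a0 a1 where "a0 \<in> G0" "a1 \<in> G1" "a = a0 + a1"
    using G_decomp by blast
  then show ?thesis
    using homogeneous[of a0 False] homogeneous[of a1 True]
    by (simp add: bracket_add_left neg_if_def algebra_simps)
qed

lemma even_part_unique:
  assumes "a \<in> G0" "x - a \<in> G1"
  shows "even_part x = a"
  unfolding pr0_def
proof (rule the_equality)
  fix a' assume a': "a' \<in> G0 \<and> x - a' \<in> G1"
  have "a - a' \<in> G0" using assms(1) a' G_diff[of _ False] by simp
  moreover have "a - a' \<in> G1"
    using G_diff[of "x - a'" True "x - a"] assms(2) a' by simp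
  ultimately have "a - a' = 0" using G0_Int_G1 by blast
  then show "a' = a" by simp
qed (use assms in blast)

lemma even_part_in: "even_part x \<in> G0" and odd_part_in: "odd_part x \<in> G1"
proof -
  obtain a c where "a \<in> G0" "c \<in> G1" "x = a + c" using G_decomp by blast
  moreover from this have "even_part x = a" by (intro even_part_unique) auto
  ultimately show "even_part x \<in> G0" "odd_part x \<in> G1" by (auto simp: pr1_def)
qed

lemma even_plus_odd_part: "even_part x + odd_part x = x"
  by (simp add: pr1_def)

lemma even_part_G0 [simp]: "x \<in> G0 \<Longrightarrow> even_part x = x"
  and odd_part_G0 [simp]: "x \<in> G0 \<Longrightarrow> odd_part x = 0"
  and even_part_G1 [simp]: "x \<in> G1 \<Longrightarrow> even_part x = 0"
  and odd_part_G1 [simp]: "x \<in> G1 \<Longrightarrow> odd_part x = x"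
  using even_part_unique[of x x] even_part_unique[of 0 x] G0_zero G1_zero by (simp_all add: pr1_def)

lemma even_part_add: "even_part (x + y) = even_part x + even_part y"
proof (rule even_part_unique)
  show "even_part x + even_part y \<in> G0"
    using G_add[of _ False] even_part_in by simp
  have "x + y - (even_part x + even_part y) = odd_part x + odd_part y"
    by (simp add: pr1_def)
  then show "x + y - (even_part x + even_part y) \<in> G1"
    using G_add[of _ True] odd_part_in by simp
qed

lemma even_part_scale: "even_part (sc c x) = sc c (even_part x)"
proof (rule even_part_unique)
  show "sc c (even_part x) \<in> G0"
    using G_scale[of _ False] even_part_in by simp
  have "sc c x - sc c (even_part x) = sc c (odd_part x)"
    by (simp add: pr1_def V.scale_right_diff_distrib)
  then show "sc c x - sc c (even_part x) \<in> G1"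
    using G_scale[of _ True] odd_part_in by simp
qed

lemma odd_part_add: "odd_part (x + y) = odd_part x + odd_part y"
  and odd_part_scale: "odd_part (sc c x) = sc c (odd_part x)"
  by (simp_all add: pr1_def even_part_add even_part_scale V.scale_right_diff_distrib)

lemma twist_add: "twist b (x + y) = twist b x + twist b y"
  and twist_scale: "twist b (sc c x) = sc c (twist b x)"
  by (simp_all add: sgnx_def even_part_add odd_part_add even_part_scale odd_part_scale
      V.scale_right_diff_distrib)

lemma twist_homogeneous: "y \<in> G c \<Longrightarrow> twist b y = neg_if (b \<and> c) y"
  by (cases c) (auto simp: sgnx_def)

subsection \<open>Multilinear operators\<close>

definition multilinear :: "('g list \<Rightarrow> 'g) \<Rightarrow> bool" where
  "multilinear f \<longleftrightarrow>
     (\<forall>as bs x y. f (as @ (x + y) # bs) = f (as @ x # bs) + f (as @ y # bs)) \<and>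
     (\<forall>as bs c x. f (as @ sc c x # bs) = sc c (f (as @ x # bs)))"

lemma multilinear_add:
  "multilinear f \<Longrightarrow> f (as @ (x + y) # bs) = f (as @ x # bs) + f (as @ y # bs)"
  and multilinear_scale: "multilinear f \<Longrightarrow> f (as @ sc c x # bs) = sc c (f (as @ x # bs))"
  by (simp_all add: multilinear_def)

lemma multilinear_add_head: "multilinear f \<Longrightarrow> f ((x + y) # bs) = f (x # bs) + f (y # bs)"
  and multilinear_scale_head: "multilinear f \<Longrightarrow> f (sc c x # bs) = sc c (f (x # bs))"
  using multilinear_add[of f "[]"] multilinear_scale[of f "[]"] by simp_all

lemma multilinear_zero_head: "multilinear f \<Longrightarrow> f (0 # bs) = 0"
  using multilinear_scale_head[of f 0 0 bs] by simp

lemma multilinear_neg_if_head: "multilinear f \<Longrightarrow> f (neg_if t x # bs) = neg_if t (f (x # bs))"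
  using multilinear_scale_head[of f "-1" x bs] by (cases t) simp_all

lemma multilinear_Cons: "multilinear f \<Longrightarrow> multilinear (\<lambda>ys. f (w # ys))"
  using multilinear_add[of f "w # as" for as] multilinear_scale[of f "w # as" for as]
  by (simp add: multilinear_def)

lemma elem_Nil [simp]: "elem y [] = y"
  by (simp add: elem_def)

lemma multilinear_elem [simp]: "multilinear (elem z)"
  by (simp add: multilinear_def elem_def)

lemma multilinear_one_op [simp]: "multilinear one_op"
  unfolding multilinear_def one_op_def
  by (auto split: list.splits simp: Cons_eq_append_conv append_eq_Cons_conv)

lemma multilinear_plus [simp]:
  "multilinear f \<Longrightarrow> multilinear g \<Longrightarrow> multilinear (\<lambda>ys. f ys + g ys)"
  by (simp add: multilinear_def V.scale_right_distrib)

lemma multilinear_neg_if [simp]: "multilinear f \<Longrightarrow> multilinear (\<lambda>ys. neg_if t (f ys))"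
  by (cases t) (simp_all add: multilinear_def)

lemma multilinear_eq_Cons:
  assumes "multilinear F" "multilinear H"
    and "\<And>c y. y \<in> G c \<Longrightarrow> F (y # xs) = H (y # xs)"
  shows "F (x # xs) = H (x # xs)"
proof -
  have "F (x # xs) = F (even_part x # xs) + F (odd_part x # xs)"
    using multilinear_add_head[OF assms(1)] even_plus_odd_part by metis
  also have "\<dots> = H (even_part x # xs) + H (odd_part x # xs)"
    using assms(3)[of "even_part x" False] assms(3)[of "odd_part x" True]
      even_part_in odd_part_in by simp
  also have "\<dots> = H (x # xs)"
    using multilinear_add_head[OF assms(2)] even_plus_odd_part by metis
  finally show ?thesis .
qed

definition dot_vec :: "nat \<Rightarrow> 'g \<Rightarrow> ('g list \<Rightarrow> 'g) \<Rightarrow> 'g list \<Rightarrow> 'g" where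
  "dot_vec p y f = (\<lambda>ys. sc (of_nat p) (f (y # ys)))"

lemma dot_vec_0 [simp]: "dot_vec 0 y f = (\<lambda>_. 0)"
  and dot_vec_zero [simp]: "dot_vec p y (\<lambda>_. 0) = (\<lambda>_. 0)"
  by (simp_all add: dot_vec_def)

lemma dot_vec_add: "dot_vec p y (\<lambda>ys. f ys + g ys) = (\<lambda>ys. dot_vec p y f ys + dot_vec p y g ys)"
  and dot_vec_scale: "dot_vec p y (\<lambda>ys. sc c (f ys)) = (\<lambda>ys. sc c (dot_vec p y f ys))"
  by (simp_all add: dot_vec_def V.scale_right_distrib mult.commute)

lemma dot_vec_add_vec: "multilinear f \<Longrightarrow> dot_vec p (x + y) f = (\<lambda>ys. dot_vec p x f ys + dot_vec p y f ys)"
  and dot_vec_scale_vec: "multilinear f \<Longrightarrow> dot_vec p (sc c y) f = (\<lambda>ys. sc c (dot_vec p y f ys))"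
  and dot_vec_neg_if_vec: "multilinear f \<Longrightarrow> dot_vec p (neg_if t y) f = (\<lambda>ys. neg_if t (dot_vec p y f ys))"
  and dot_vec_zero_vec: "multilinear f \<Longrightarrow> dot_vec p 0 f = (\<lambda>_. 0)"
  by (simp_all add: dot_vec_def multilinear_add_head multilinear_scale_head mult.commute
      multilinear_neg_if_head multilinear_zero_head V.scale_right_distrib scale_neg_if)

lemma multilinear_dot_vec [simp]: "multilinear f \<Longrightarrow> multilinear (dot_vec p y f)"
  using multilinear_Cons[of f y]
  by (simp add: multilinear_def dot_vec_def V.scale_right_distrib mult.commute)

lemma dot_vec_one_op [simp]: "dot_vec (Suc 0) y one_op = elem y"
  by (simp add: dot_vec_def one_op_def elem_def fun_eq_iff split: list.splits)

subsection \<open>The extended bracket\<close>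

abbreviation "br \<equiv> ext_br sc G0 G1 brG"
abbreviation "dot \<equiv> dot_op sc G0 G1"
abbreviation "ad \<equiv> ad_one sc G0 G1 brG"

lemma comp_op_order_zero: "comp_op G0 G1 p 0 b f g xs = (if p = 0 then 0 else f (g [] # xs))"
  by (cases xs) simp_all

lemma dot_op_order_zero: "dot p 0 b f g = dot_vec p (g []) f"
proof (cases p)
  case (Suc p')
  then have "(fact p * fact 0 / fact (p + 0 - 1) :: 'k) = of_nat p"
    by simp
  then show ?thesis
    by (simp add: dot_op_def dot_vec_def comp_op_order_zero fun_eq_iff)
qed (simp add: dot_op_def fun_eq_iff)

lemma ext_br_zero_left [simp]: "br p q b (\<lambda>_. 0) g = (\<lambda>_. 0)"
  and ext_br_zero_right [simp]: "br p q b f (\<lambda>_. 0) = (\<lambda>_. 0)"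
proof -
  have "br p q b (\<lambda>_. 0) g xs = 0 \<and> br p q b f (\<lambda>_. 0) xs = 0" for xs
    by (induction xs arbitrary: p q b f g) (simp_all add: dot_op_order_zero)
  then show "br p q b (\<lambda>_. 0) g = (\<lambda>_. 0)" "br p q b f (\<lambda>_. 0) = (\<lambda>_. 0)"
    by auto
qed

lemma ext_br_Cons: "br p q b f g (x # xs) = (if p + q = 0 then 0 else
   sc (inverse (of_nat (p + q)))
     (br p (q - 1) b f (dot_vec q (even_part x) g) xs
      + br p (q - 1) (\<not> b) f (dot_vec q (odd_part x) g) xs
      + br (p - 1) q b (dot_vec p (twist b x) f) g xs))"
  by (simp add: dot_op_order_zero)

declare ext_br.simps(2) [simp del]

lemma ext_br_add_left: "br p q b (\<lambda>ys. f1 ys + f2 ys) g xs = br p q b f1 g xs + br p q b f2 g xs"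
  by (induction xs arbitrary: p q b f1 f2 g)
    (simp_all add: ext_br_Cons dot_vec_add bracket_add_left scale_add3_split)

lemma ext_br_add_right: "br p q b f (\<lambda>ys. g1 ys + g2 ys) xs = br p q b f g1 xs + br p q b f g2 xs"
  by (induction xs arbitrary: p q b f g1 g2)
    (simp_all add: ext_br_Cons dot_vec_add bracket_add_right scale_add3_split)

lemma ext_br_scale_left: "br p q b (\<lambda>ys. sc c (f ys)) g xs = sc c (br p q b f g xs)"
  by (induction xs arbitrary: p q b f g)
    (simp_all add: ext_br_Cons dot_vec_scale bracket_scale_left V.scale_right_distrib mult.commute)

lemma ext_br_scale_right: "br p q b f (\<lambda>ys. sc c (g ys)) xs = sc c (br p q b f g xs)"
  by (induction xs arbitrary: p q b f g)
    (simp_all add: ext_br_Cons dot_vec_scale bracket_scale_right V.scale_right_distrib mult.commute)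

lemma ext_br_neg_if_left: "br p q b (\<lambda>ys. neg_if t (f ys)) g xs = neg_if t (br p q b f g xs)"
  and ext_br_neg_if_right: "br p q b f (\<lambda>ys. neg_if t (g ys)) xs = neg_if t (br p q b f g xs)"
  using ext_br_scale_left[of p q b "-1" f g xs] ext_br_scale_right[of p q b f "-1" g xs]
  by (cases t; simp)+

lemma ext_br_sum_left:
  "finite K \<Longrightarrow> br p q b (\<lambda>ys. \<Sum>k\<in>K. h k ys) g xs = (\<Sum>k\<in>K. br p q b (h k) g xs)"
  by (induction K rule: finite_induct) (simp_all add: ext_br_add_left)

lemma ext_br_add_arg:
  "multilinear f \<Longrightarrow> multilinear g \<Longrightarrow>
   br p q b f g (as @ (x + y) # bs) = br p q b f g (as @ x # bs) + br p q b f g (as @ y # bs)"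
proof (induction as arbitrary: p q b f g)
  case Nil
  then show ?case
    by (simp add: ext_br_Cons even_part_add odd_part_add twist_add dot_vec_add_vec
        ext_br_add_left ext_br_add_right scale_add3_split)
qed (simp add: ext_br_Cons scale_add3_split)

lemma ext_br_scale_arg:
  "multilinear f \<Longrightarrow> multilinear g \<Longrightarrow>
   br p q b f g (as @ sc c x # bs) = sc c (br p q b f g (as @ x # bs))"
proof (induction as arbitrary: p q b f g)
  case Nil
  then show ?case
    by (simp add: ext_br_Cons even_part_scale odd_part_scale twist_scale dot_vec_scale_vec
        ext_br_scale_left ext_br_scale_right V.scale_right_distrib mult.commute)
qed (simp add: ext_br_Cons V.scale_right_distrib mult.commute)

lemma multilinear_ext_br [simp]:
  "multilinear f \<Longrightarrow> multilinear g \<Longrightarrow> multilinear (br p q b f g)"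
  by (simp add: multilinear_def ext_br_add_arg ext_br_scale_arg)

lemma ext_br_Cons_homogeneous:
  assumes "multilinear f" "multilinear g" "y \<in> G c"
  shows "br p q b f g (y # xs) = (if p + q = 0 then 0 else
    sc (inverse (of_nat (p + q)))
      (br p (q - 1) (b \<noteq> c) f (dot_vec q y g) xs
       + neg_if (b \<and> c) (br (p - 1) q b (dot_vec p y f) g xs)))"
  using assms twist_homogeneous[OF assms(3)]
  by (cases c) (simp_all add: ext_br_Cons dot_vec_zero_vec
      dot_vec_neg_if_vec ext_br_neg_if_left)

lemma dot_vec_ext_br:
  assumes "multilinear f" "multilinear g" "y \<in> G c"
  shows "dot_vec (p + q) y (br p q b f g) =
    (\<lambda>xs. br p (q - 1) (b \<noteq> c) f (dot_vec q y g) xs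
          + neg_if (b \<and> c) (br (p - 1) q b (dot_vec p y f) g xs))"
proof (cases "p + q = 0")
  case False
  then have "(of_nat (p + q) :: 'k) \<noteq> 0" by (simp del: of_nat_add)
  with assms show ?thesis
    by (simp add: dot_vec_def ext_br_Cons_homogeneous fun_eq_iff del: of_nat_add)
qed (simp add: fun_eq_iff)

definition has_parity :: "bool \<Rightarrow> ('g list \<Rightarrow> 'g) \<Rightarrow> bool" where
  "has_parity b g \<longleftrightarrow> (\<forall>xs ps. list_all2 (\<lambda>x c. x \<in> G c) xs ps \<longrightarrow>
     g xs \<in> G (foldr (\<lambda>a c. a \<noteq> c) ps b))"

lemma foldr_xor_Cons: "foldr (\<lambda>a c. a \<noteq> c) (c # ps) b = foldr (\<lambda>a c. a \<noteq> c) ps (b \<noteq> c)"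
  by (induction ps) auto

lemma has_parity_Nil: "has_parity b g \<Longrightarrow> g [] \<in> G b"
  unfolding has_parity_def by (metis foldr.simps(1) id_apply list.rel_intros(1))

lemma has_parity_dot_vec:
  assumes "has_parity b g" "w \<in> G c"
  shows "has_parity (b \<noteq> c) (dot_vec q w g)"
  unfolding has_parity_def dot_vec_def
proof (intro allI impI G_scale)
  fix xs ps assume "list_all2 (\<lambda>x c. x \<in> G c) xs ps"
  with assms(2) have "list_all2 (\<lambda>x c. x \<in> G c) (w # xs) (c # ps)"
    by simp
  with assms(1) have "g (w # xs) \<in> G (foldr (\<lambda>a c. a \<noteq> c) (c # ps) b)"
    unfolding has_parity_def by blast
  then show "g (w # xs) \<in> G (foldr (\<lambda>a c. a \<noteq> c) ps (b \<noteq> c))"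
    by (simp only: foldr_xor_Cons)
qed

lemma has_parity_one_op: "has_parity False one_op"
  by (auto simp: has_parity_def one_op_def list_all2_Cons1 split: list.splits)

lemma has_parity_ext_br:
  assumes "multilinear f" "multilinear g" "has_parity a f" "has_parity b g"
  shows "has_parity (a \<noteq> b) (br p q b f g)"
proof -
  have "br p q b f g xs \<in> G (foldr (\<lambda>a c. a \<noteq> c) ps (a \<noteq> b))"
    if "list_all2 (\<lambda>x c. x \<in> G c) xs ps" for xs ps
    using that assms
  proof (induction xs ps arbitrary: p q a b f g rule: list_all2_induct)
    case Nil
    then show ?case
      using bracket_parity[OF has_parity_Nil has_parity_Nil] by simp
  next
    case (Cons x xs c ps)
    have xor: "(a \<noteq> (b \<noteq> c)) = ((a \<noteq> b) \<noteq> c)" "((a \<noteq> c) \<noteq> b) = ((a \<noteq> b) \<noteq> c)"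
      by auto
    have "br p (q - 1) (b \<noteq> c) f (dot_vec q x g) xs \<in> G (foldr (\<lambda>a c. a \<noteq> c) ps (a \<noteq> (b \<noteq> c)))"
      using Cons.prems Cons.hyps(1) by (intro Cons.IH has_parity_dot_vec) simp_all
    moreover have "br (p - 1) q b (dot_vec p x f) g xs \<in> G (foldr (\<lambda>a c. a \<noteq> c) ps ((a \<noteq> c) \<noteq> b))"
      using Cons.prems Cons.hyps(1) by (intro Cons.IH has_parity_dot_vec) simp_all
    ultimately show ?case
      unfolding ext_br_Cons_homogeneous[OF Cons.prems(1,2) Cons.hyps(1)] foldr_xor_Cons xor
      by (auto intro!: G_scale G_add G_neg_if)
  qed
  then show ?thesis
    unfolding has_parity_def by blast
qed

lemma dot_vec_ext_br_elem:
  assumes "multilinear f" "y \<in> G d"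
  shows "dot_vec p y (br p 0 c f (elem z)) = (\<lambda>xs. neg_if (c \<and> d) (br (p - 1) 0 c (dot_vec p y f) (elem z) xs))"
  using dot_vec_ext_br[OF assms(1) multilinear_elem assms(2), of p 0 c] by simp

lemma ext_br_elem_jacobi:
  assumes "multilinear f" "multilinear g" "has_parity b g" "z \<in> G c"
  shows "br (p + q) 0 c (br p q b f g) (elem z) xs =
    br p q (b \<noteq> c) f (br q 0 c g (elem z)) xs + neg_if (b \<and> c) (br p q b (br p 0 c f (elem z)) g xs)"
  using assms(1-3)
proof (induction xs arbitrary: p q b f g)
  case Nil
  then show ?case
    using bracket_jacobi_right[OF has_parity_Nil[OF Nil(3)] assms(4)] by (cases "p + q = 0") auto
next
  case (Cons x xs)
  show ?case
  proof (rule multilinear_eq_Cons)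
    fix d y assume y: "y \<in> G d"
    show "br (p + q) 0 c (br p q b f g) (elem z) (y # xs) =
      br p q (b \<noteq> c) f (br q 0 c g (elem z)) (y # xs) + neg_if (b \<and> c) (br p q b (br p 0 c f (elem z)) g (y # xs))"
    proof (cases "p + q = 0")
      case False
      define i where "i = inverse (of_nat (p + q) :: 'k)"
      define Dg Df where "Dg = dot_vec q y g" and "Df = dot_vec p y f"
      have IH_g: "br (p + q - 1) 0 c (br p (q - 1) (b \<noteq> d) f Dg) (elem z) xs =
          br p (q - 1) ((b \<noteq> d) \<noteq> c) f (br (q - 1) 0 c Dg (elem z)) xs
          + neg_if ((b \<noteq> d) \<and> c) (br p (q - 1) (b \<noteq> d) (br p 0 c f (elem z)) Dg xs)"
      proof (cases q)
        case (Suc q')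
        then show ?thesis
          using Cons.IH[where q=q' and b="b \<noteq> d" and g=Dg] Cons.prems
            has_parity_dot_vec[OF Cons.prems(3) y]
          by (simp add: Dg_def)
      qed (simp add: Dg_def)
      have IH_f: "br (p + q - 1) 0 c (br (p - 1) q b Df g) (elem z) xs =
          br (p - 1) q (b \<noteq> c) Df (br q 0 c g (elem z)) xs
          + neg_if (b \<and> c) (br (p - 1) q b (br (p - 1) 0 c Df (elem z)) g xs)"
      proof (cases p)
        case (Suc p')
        then show ?thesis
          using Cons.IH[where p=p' and f=Df] Cons.prems by (simp add: Df_def)
      qed (simp add: Df_def)
      have L: "br (p + q) 0 c (br p q b f g) (elem z) (y # xs) = sc i (neg_if (c \<and> d)
          (br (p + q - 1) 0 c (br p (q - 1) (b \<noteq> d) f Dg) (elem z) xs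
           + neg_if (b \<and> d) (br (p + q - 1) 0 c (br (p - 1) q b Df g) (elem z) xs)))"
        using False Cons.prems y
        by (simp add: ext_br_Cons_homogeneous dot_vec_ext_br ext_br_add_left ext_br_neg_if_left
            i_def Dg_def Df_def)
      have R_g: "br p q (b \<noteq> c) f (br q 0 c g (elem z)) (y # xs) = sc i
          (neg_if (c \<and> d) (br p (q - 1) ((b \<noteq> c) \<noteq> d) f (br (q - 1) 0 c Dg (elem z)) xs)
           + neg_if ((b \<noteq> c) \<and> d) (br (p - 1) q (b \<noteq> c) Df (br q 0 c g (elem z)) xs))"
        using False Cons.prems y
        by (simp add: ext_br_Cons_homogeneous dot_vec_ext_br_elem ext_br_neg_if_right
            i_def Dg_def Df_def)
      have R_f: "br p q b (br p 0 c f (elem z)) g (y # xs) = sc i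
          (br p (q - 1) (b \<noteq> d) (br p 0 c f (elem z)) Dg xs
           + neg_if (b \<and> d) (neg_if (c \<and> d) (br (p - 1) q b (br (p - 1) 0 c Df (elem z)) g xs)))"
        using False Cons.prems y
        by (simp add: ext_br_Cons_homogeneous dot_vec_ext_br_elem ext_br_neg_if_left
            i_def Dg_def Df_def)
      show ?thesis
        unfolding L R_g R_f IH_g IH_f
        by (cases b; cases c; cases d) (simp_all add: V.scale_right_distrib algebra_simps)
    qed (simp add: ext_br_Cons)
  qed (use Cons.prems in simp_all)
qed

lemma dot_vec_ext_br_one:
  assumes "multilinear f" "y \<in> G d"
  shows "dot_vec (Suc p) y (br p 1 False f one_op) =
    (\<lambda>xs. br p 0 d f (elem y) xs + br (p - 1) 1 False (dot_vec p y f) one_op xs)"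
  using dot_vec_ext_br[OF assms(1) multilinear_one_op assms(2), of p 1 False] by simp

lemma ext_br_one_derivation:
  assumes "multilinear f" "multilinear g" "has_parity b g"
  shows "br (p + q) 1 False (br p q b f g) one_op xs =
    br p (q + 1) b f (br q 1 False g one_op) xs + br (p + 1) q b (br p 1 False f one_op) g xs"
  using assms
proof (induction xs arbitrary: p q b f g)
  case (Cons x xs)
  show ?case
  proof (rule multilinear_eq_Cons)
    fix d y assume y: "y \<in> G d"
    define i where "i = inverse (of_nat (Suc (p + q)) :: 'k)"
    define Dg Df where "Dg = dot_vec q y g" and "Df = dot_vec p y f"
    have IH_g: "br (p + q - 1) 1 False (br p (q - 1) (b \<noteq> d) f Dg) one_op xs =
        br p q (b \<noteq> d) f (br (q - 1) 1 False Dg one_op) xs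
        + br (p + 1) (q - 1) (b \<noteq> d) (br p 1 False f one_op) Dg xs"
    proof (cases q)
      case (Suc q')
      then show ?thesis
        using Cons.IH[where q=q' and b="b \<noteq> d" and g=Dg] Cons.prems
          has_parity_dot_vec[OF Cons.prems(3) y]
        by (simp add: Dg_def)
    qed (simp add: Dg_def)
    have IH_f: "br (p + q - 1) 1 False (br (p - 1) q b Df g) one_op xs =
        br (p - 1) (q + 1) b Df (br q 1 False g one_op) xs
        + br p q b (br (p - 1) 1 False Df one_op) g xs"
    proof (cases p)
      case (Suc p')
      then show ?thesis
        using Cons.IH[where p=p' and f=Df] Cons.prems by (simp add: Df_def)
    qed (simp add: Df_def)
    have J: "br (p + q) 0 d (br p q b f g) (elem y) xs =
        br p q (b \<noteq> d) f (br q 0 d g (elem y)) xs + neg_if (b \<and> d) (br p q b (br p 0 d f (elem y)) g xs)"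
      using ext_br_elem_jacobi[OF Cons.prems y] .
    have L: "br (p + q) 1 False (br p q b f g) one_op (y # xs) = sc i
        (br (p + q) 0 d (br p q b f g) (elem y) xs
         + br (p + q - 1) 1 False (br p (q - 1) (b \<noteq> d) f Dg) one_op xs
         + neg_if (b \<and> d) (br (p + q - 1) 1 False (br (p - 1) q b Df g) one_op xs))"
      using Cons.prems y
      by (simp add: ext_br_Cons_homogeneous dot_vec_ext_br ext_br_add_left ext_br_neg_if_left
          i_def Dg_def Df_def)
    have R_g: "br p (q + 1) b f (br q 1 False g one_op) (y # xs) = sc i
        (br p q (b \<noteq> d) f (br q 0 d g (elem y)) xs
         + br p q (b \<noteq> d) f (br (q - 1) 1 False Dg one_op) xs
         + neg_if (b \<and> d) (br (p - 1) (q + 1) b Df (br q 1 False g one_op) xs))"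
      using Cons.prems y
      by (simp add: ext_br_Cons_homogeneous dot_vec_ext_br_one[unfolded One_nat_def] ext_br_add_right
          i_def Dg_def Df_def)
    have R_f: "br (p + 1) q b (br p 1 False f one_op) g (y # xs) = sc i
        (br (p + 1) (q - 1) (b \<noteq> d) (br p 1 False f one_op) Dg xs
         + neg_if (b \<and> d) (br p q b (br p 0 d f (elem y)) g xs
           + br p q b (br (p - 1) 1 False Df one_op) g xs))"
      using Cons.prems y
      by (simp add: ext_br_Cons_homogeneous dot_vec_ext_br_one[unfolded One_nat_def] ext_br_add_left
          i_def Dg_def Df_def)
    show "br (p + q) 1 False (br p q b f g) one_op (y # xs) =
      br p (q + 1) b f (br q 1 False g one_op) (y # xs) + br (p + 1) q b (br p 1 False f one_op) g (y # xs)"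
      unfolding L R_g R_f J IH_g IH_f
      by (cases b; cases d) (simp_all add: V.scale_right_distrib algebra_simps)
  qed (use Cons.prems in simp_all)
qed simp

subsection \<open>The product \<open>\<bullet>\<close>\<close>

abbreviation "cmp \<equiv> comp_op G0 G1"

lemma comp_op_0 [simp]: "cmp 0 q b f g xs = 0"
  by (cases xs) simp_all

lemma comp_op_add_left: "cmp p q b (\<lambda>ys. f1 ys + f2 ys) g xs = cmp p q b f1 g xs + cmp p q b f2 g xs"
  by (induction xs arbitrary: p q b f1 f2 g) (simp_all add: algebra_simps)

lemma comp_op_scale_left: "cmp p q b (\<lambda>ys. sc c (f ys)) g xs = sc c (cmp p q b f g xs)"
  by (induction xs arbitrary: p q b f g) (simp_all add: V.scale_right_distrib)

lemma comp_op_add_right: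
  "multilinear f \<Longrightarrow> cmp p q b f (\<lambda>ys. g1 ys + g2 ys) xs = cmp p q b f g1 xs + cmp p q b f g2 xs"
  by (induction xs arbitrary: p q b f g1 g2)
    (simp_all add: multilinear_add_head multilinear_Cons algebra_simps)

lemma comp_op_scale_right:
  "multilinear f \<Longrightarrow> cmp p q b f (\<lambda>ys. sc c (g ys)) xs = sc c (cmp p q b f g xs)"
  by (induction xs arbitrary: p q b f g)
    (simp_all add: multilinear_scale_head multilinear_Cons V.scale_right_distrib)

lemma comp_op_add_arg:
  "multilinear f \<Longrightarrow> multilinear g \<Longrightarrow>
   cmp p q b f g (as @ (x + y) # bs) = cmp p q b f g (as @ x # bs) + cmp p q b f g (as @ y # bs)"
proof (induction as arbitrary: p q b f g)
  case Nil
  then show ?case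
    using multilinear_add[of f "[g []]"]
    by (simp add: even_part_add odd_part_add twist_add multilinear_add_head
        comp_op_add_left comp_op_add_right algebra_simps)
next
  case (Cons a as)
  then show ?case
    using multilinear_add[of f "g [] # a # as"]
    by (simp add: multilinear_Cons)
qed

lemma comp_op_scale_arg:
  "multilinear f \<Longrightarrow> multilinear g \<Longrightarrow>
   cmp p q b f g (as @ sc c x # bs) = sc c (cmp p q b f g (as @ x # bs))"
proof (induction as arbitrary: p q b f g)
  case Nil
  then show ?case
    using multilinear_scale[of f "[g []]"]
    by (simp add: even_part_scale odd_part_scale twist_scale multilinear_scale_head
        comp_op_scale_left comp_op_scale_right V.scale_right_distrib)
next
  case (Cons a as)
  then show ?case
    using multilinear_scale[of f "g [] # a # as"]
    by (simp add: multilinear_Cons V.scale_right_distrib)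
qed

lemma multilinear_dot_op [simp]:
  "multilinear f \<Longrightarrow> multilinear g \<Longrightarrow> multilinear (dot p q b f g)"
  by (simp add: multilinear_def dot_op_def comp_op_add_arg comp_op_scale_arg V.scale_right_distrib)

lemma dot_op_0 [simp]: "dot 0 q b f g = (\<lambda>_. 0)"
  by (simp add: dot_op_def)

lemma dot_op_add_left: "dot p q b (\<lambda>ys. f1 ys + f2 ys) g xs = dot p q b f1 g xs + dot p q b f2 g xs"
  and dot_op_scale_left: "dot p q b (\<lambda>ys. sc c (f ys)) g xs = sc c (dot p q b f g xs)"
  by (simp_all add: dot_op_def comp_op_add_left comp_op_scale_left V.scale_right_distrib mult.commute)

lemma dot_op_neg_if_left: "dot p q b (\<lambda>ys. neg_if t (f ys)) g xs = neg_if t (dot p q b f g xs)"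
  using dot_op_scale_left[of p q b "-1" f g xs] by (cases t) simp_all

lemma dot_op_scale_right:
  "multilinear f \<Longrightarrow> dot p q b f (\<lambda>ys. sc c (g ys)) xs = sc c (dot p q b f g xs)"
  by (simp add: dot_op_def comp_op_scale_right mult.commute)

lemma dot_op_zero_right: "multilinear f \<Longrightarrow> dot p q b f (\<lambda>_. 0) = (\<lambda>_. 0)"
  using dot_op_scale_right[of f p q b 0 "\<lambda>_. 0"] by (simp add: fun_eq_iff)

lemma dot_op_Cons:
  assumes "q \<noteq> 0" "multilinear f"
  shows "dot p q b f g (x # xs) = sc (inverse (of_nat (p + q - 1)))
    (dot p (q - 1) b f (dot_vec q (even_part x) g) xs
     + dot p (q - 1) (\<not> b) f (dot_vec q (odd_part x) g) xs
     + dot (p - 1) q b (dot_vec p (twist b x) f) g xs)"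
proof (cases p)
  case (Suc p')
  obtain q' where q: "q = Suc q'" using assms(1) not0_implies_Suc by blast
  define c where "c m n = (fact m * fact n / fact (m + n - 1) :: 'k)" for m n
  have c_right: "inverse (of_nat (p + q - 1)) * (c p q' * of_nat q) = c p q"
    unfolding c_def Suc q by (simp add: fact_Suc[of q'] fact_Suc[of "p' + q'"] field_simps del: fact_Suc)
  have c_left: "inverse (of_nat (p + q - 1)) * (c p' q * of_nat p) = c p q"
    unfolding c_def Suc q by (simp add: fact_Suc[of p'] fact_Suc[of "p' + q'"] field_simps del: fact_Suc)
  have right: "dot p (q - 1) b' f (dot_vec q w g) xs =
      sc (c p q' * of_nat q) (cmp p q' b' f (\<lambda>ys. g (w # ys)) xs)" for w b'
    using Suc q by (simp add: dot_op_def c_def dot_vec_def comp_op_scale_right[OF assms(2)])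
  have left: "dot (p - 1) q b (dot_vec p w f) g xs =
      sc (c p' q * of_nat p) (cmp p' q b (\<lambda>ys. f (w # ys)) g xs)" for w
    using Suc by (cases p') (simp_all add: dot_op_def c_def dot_vec_def comp_op_scale_left)
  have "dot p q b f g (x # xs) = sc (c p q)
      (cmp p q' b f (\<lambda>ys. g (even_part x # ys)) xs + cmp p q' (\<not> b) f (\<lambda>ys. g (odd_part x # ys)) xs
       + cmp p' q b (\<lambda>ys. f (twist b x # ys)) g xs)"
    using Suc q by (simp add: dot_op_def c_def)
  then show ?thesis
    unfolding right left using c_left c_right by (simp add: V.scale_right_distrib)
qed (simp add: dot_op_def)

lemma dot_op_Cons_homogeneous:
  assumes "q \<noteq> 0" "multilinear f" "multilinear g" "y \<in> G d"
  shows "dot p q b f g (y # xs) = sc (inverse (of_nat (p + q - 1)))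
    (dot p (q - 1) (b \<noteq> d) f (dot_vec q y g) xs + neg_if (b \<and> d) (dot (p - 1) q b (dot_vec p y f) g xs))"
  using assms twist_homogeneous[OF assms(4)]
  by (cases d) (simp_all add: dot_op_Cons dot_vec_zero_vec dot_op_zero_right dot_vec_neg_if_vec
      dot_op_neg_if_left)

lemma dot_vec_dot_op:
  assumes "q \<noteq> 0" "multilinear f" "multilinear g" "y \<in> G d"
  shows "dot_vec (p + q - 1) y (dot p q b f g) =
    (\<lambda>xs. dot p (q - 1) (b \<noteq> d) f (dot_vec q y g) xs + neg_if (b \<and> d) (dot (p - 1) q b (dot_vec p y f) g xs))"
proof (cases "p = 0")
  case False
  with assms(1) have "p + q - 1 \<noteq> 0" by simp
  then have "(of_nat (p + q - 1) :: 'k) \<noteq> 0" by (metis of_nat_eq_0_iff)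
  with assms show ?thesis
    by (simp add: dot_vec_def dot_op_Cons_homogeneous fun_eq_iff del: of_nat_diff)
qed (simp add: fun_eq_iff)

lemma ext_br_order_zero_right: "br p 0 b f g = br p 0 b f (elem (g []))"
proof
  show "br p 0 b f g xs = br p 0 b f (elem (g [])) xs" for xs
    by (induction xs arbitrary: p f) (simp_all add: ext_br_Cons)
qed

lemma dot_op_ext_br_elem:
  assumes "multilinear f" "multilinear g" "has_parity b g" "z \<in> G c"
  shows "dot p q b (br p 0 c f (elem z)) g xs = neg_if (b \<and> c) (br (p + q - 1) 0 c (dot p q b f g) (elem z) xs)"
proof -
  have order_zero: "dot p 0 b' (br p 0 c f' (elem z)) g' xs' =
      neg_if (b' \<and> c) (br (p - 1) 0 c (dot p 0 b' f' g') (elem z) xs')"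
    if "multilinear f'" "has_parity b' g'" for p b' f' g' xs'
    using that has_parity_Nil[OF that(2)]
    by (simp add: dot_op_order_zero dot_vec_ext_br_elem conj_commute)
  show ?thesis
    using assms(1-3)
  proof (induction xs arbitrary: p q b f g)
    case Nil
    then show ?case
      using order_zero by (cases "q = 0") (simp_all add: dot_op_def)
  next
    case (Cons x xs)
    show ?case
    proof (cases "p = 0 \<or> q = 0")
      case False
      then obtain p' q' where p: "p = Suc p'" and q: "q = Suc q'"
        by (meson not0_implies_Suc)
      have step: "dot (Suc p') (Suc q') b (br (Suc p') 0 c f (elem z)) g (y # xs) =
          neg_if (b \<and> c) (br (Suc (p' + q')) 0 c (dot (Suc p') (Suc q') b f g) (elem z) (y # xs))"
        if y: "y \<in> G d" for y d
      proof -
        define i where "i = inverse (of_nat (Suc (p' + q')) :: 'k)"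
        define Dg Df where "Dg = dot_vec (Suc q') y g" and "Df = dot_vec (Suc p') y f"
        have IH_g: "dot (Suc p') q' (b \<noteq> d) (br (Suc p') 0 c f (elem z)) Dg xs =
            neg_if ((b \<noteq> d) \<and> c) (br (p' + q') 0 c (dot (Suc p') q' (b \<noteq> d) f Dg) (elem z) xs)"
          using Cons.IH[where p="Suc p'" and q=q' and b="b \<noteq> d" and g=Dg] Cons.prems
            has_parity_dot_vec[OF Cons.prems(3) y]
          by (simp add: Dg_def)
        have IH_f: "dot p' (Suc q') b (br p' 0 c Df (elem z)) g xs =
            neg_if (b \<and> c) (br (p' + q') 0 c (dot p' (Suc q') b Df g) (elem z) xs)"
          using Cons.IH[where p=p' and q="Suc q'" and f=Df] Cons.prems by (simp add: Df_def)
        have L: "dot (Suc p') (Suc q') b (br (Suc p') 0 c f (elem z)) g (y # xs) = sc i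
            (dot (Suc p') q' (b \<noteq> d) (br (Suc p') 0 c f (elem z)) Dg xs
             + neg_if (b \<and> d) (neg_if (c \<and> d) (dot p' (Suc q') b (br p' 0 c Df (elem z)) g xs)))"
          using Cons.prems y
          by (simp add: dot_op_Cons_homogeneous dot_vec_ext_br_elem dot_op_neg_if_left
              i_def Dg_def Df_def)
        have R: "br (Suc (p' + q')) 0 c (dot (Suc p') (Suc q') b f g) (elem z) (y # xs) = sc i
            (neg_if (c \<and> d) (br (p' + q') 0 c (dot (Suc p') q' (b \<noteq> d) f Dg) (elem z) xs
             + neg_if (b \<and> d) (br (p' + q') 0 c (dot p' (Suc q') b Df g) (elem z) xs)))"
          using Cons.prems y dot_vec_dot_op[of "Suc q'" f g y d "Suc p'" b]
          by (simp add: ext_br_Cons_homogeneous ext_br_add_left ext_br_neg_if_left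
              i_def Dg_def Df_def)
        show ?thesis
          unfolding L R IH_g IH_f
          by (cases b; cases c; cases d) (simp_all add: V.scale_right_distrib algebra_simps)
      qed
      show ?thesis
        unfolding p q
        by (rule multilinear_eq_Cons) (use step Cons.prems in simp_all)
    qed (use order_zero Cons.prems in auto)
  qed
qed

lemma dot_op_ext_br_one:
  assumes "multilinear f" "multilinear g" "has_parity b g"
  shows "dot (Suc p) q b (br p 1 False f one_op) g xs =
    br p q b f g xs + br (p + q - 1) 1 False (dot p q b f g) one_op xs"
proof -
  have order_zero: "dot (Suc p) 0 b' (br p 1 False f' one_op) g' xs' =
      br p 0 b' f' g' xs' + br (p - 1) 1 False (dot p 0 b' f' g') one_op xs'"
    if "multilinear f'" "has_parity b' g'" for p b' f' g' xs'
    using that has_parity_Nil[OF that(2)]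
    by (simp add: dot_op_order_zero dot_vec_ext_br_one[unfolded One_nat_def]
        ext_br_order_zero_right[of p b' f' g'])
  show ?thesis
    using assms
  proof (induction xs arbitrary: p q b f g)
    case Nil
    then show ?case
      using order_zero by (cases "q = 0") (simp_all add: dot_op_def)
  next
    case (Cons x xs)
    show ?case
    proof (cases "q = 0")
      case False
      then obtain q' where q: "q = Suc q'"
        by (meson not0_implies_Suc)
      have step: "dot (Suc p) (Suc q') b (br p 1 False f one_op) g (y # xs) =
          br p (Suc q') b f g (y # xs) + br (p + q') 1 False (dot p (Suc q') b f g) one_op (y # xs)"
        if y: "y \<in> G d" for y d
      proof -
        define i where "i = inverse (of_nat (Suc (p + q')) :: 'k)"
        define Dg Df where "Dg = dot_vec (Suc q') y g" and "Df = dot_vec p y f"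
        have IH_g: "dot (Suc p) q' (b \<noteq> d) (br p 1 False f one_op) Dg xs =
            br p q' (b \<noteq> d) f Dg xs + br (p + q' - 1) 1 False (dot p q' (b \<noteq> d) f Dg) one_op xs"
          using Cons.IH[where q=q' and b="b \<noteq> d" and g=Dg] Cons.prems
            has_parity_dot_vec[OF Cons.prems(3) y]
          by (simp add: Dg_def)
        have IH_f: "dot p (Suc q') b (br (p - 1) 1 False Df one_op) g xs =
            br (p - 1) (Suc q') b Df g xs + br (p + q' - 1) 1 False (dot (p - 1) (Suc q') b Df g) one_op xs"
        proof (cases p)
          case (Suc p')
          then show ?thesis
            using Cons.IH[where p=p' and q="Suc q'" and f=Df] Cons.prems by (simp add: Df_def)
        qed (simp add: Df_def)
        have M: "dot p (Suc q') b (br p 0 d f (elem y)) g xs =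
            neg_if (b \<and> d) (br (p + q') 0 d (dot p (Suc q') b f g) (elem y) xs)"
          using dot_op_ext_br_elem[OF Cons.prems y, of p "Suc q'" xs] by simp
        have L: "dot (Suc p) (Suc q') b (br p 1 False f one_op) g (y # xs) = sc i
            (dot (Suc p) q' (b \<noteq> d) (br p 1 False f one_op) Dg xs
             + neg_if (b \<and> d) (dot p (Suc q') b (br p 0 d f (elem y)) g xs
               + dot p (Suc q') b (br (p - 1) 1 False Df one_op) g xs))"
          using Cons.prems y
          by (simp add: dot_op_Cons_homogeneous dot_vec_ext_br_one[unfolded One_nat_def]
              dot_op_add_left i_def Dg_def Df_def)
        have R_g: "br p (Suc q') b f g (y # xs) = sc i
            (br p q' (b \<noteq> d) f Dg xs + neg_if (b \<and> d) (br (p - 1) (Suc q') b Df g xs))"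
          using Cons.prems y by (simp add: ext_br_Cons_homogeneous i_def Dg_def Df_def)
        have R_dot: "br (p + q') 1 False (dot p (Suc q') b f g) one_op (y # xs) = sc i
            (br (p + q') 0 d (dot p (Suc q') b f g) (elem y) xs
             + br (p + q' - 1) 1 False (dot p q' (b \<noteq> d) f Dg) one_op xs
             + neg_if (b \<and> d) (br (p + q' - 1) 1 False (dot (p - 1) (Suc q') b Df g) one_op xs))"
          using Cons.prems y dot_vec_dot_op[of "Suc q'" f g y d p b]
          by (simp add: ext_br_Cons_homogeneous ext_br_add_left ext_br_neg_if_left
              i_def Dg_def Df_def)
        show ?thesis
          unfolding L R_g R_dot M IH_g IH_f
          by (cases b; cases d) (simp_all add: V.scale_right_distrib algebra_simps)
      qed
      show ?thesis
        unfolding q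
        by (rule multilinear_eq_Cons) (use step Cons.prems in simp_all)
    qed (use order_zero Cons.prems in simp)
  qed
qed

subsection \<open>Iterated brackets with the identity\<close>

lemma multilinear_ad_one [simp]: "multilinear f \<Longrightarrow> multilinear (ad p f n)"
  by (induction n) simp_all

lemma ad_one_zero [simp]: "ad p (\<lambda>_. 0) n = (\<lambda>_. 0)"
  by (induction n) simp_all

lemma has_parity_ad_one: "multilinear f \<Longrightarrow> has_parity a f \<Longrightarrow> has_parity a (ad p f n)"
  using has_parity_ext_br[OF _ multilinear_one_op _ has_parity_one_op] by (induction n) simp_all

lemma sum_binomial_Suc_atMost:
  "(\<Sum>k\<le>n. sc (of_nat (n choose k)) (h k (Suc (n - k)) + h (Suc k) (n - k))) =
   (\<Sum>k\<le>Suc n. sc (of_nat (Suc n choose k)) (h k (Suc n - k)))"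
proof -
  have "(\<Sum>k\<le>n. sc (of_nat (n choose k)) (h k (Suc (n - k)))) =
      (\<Sum>k\<le>Suc n. sc (of_nat (n choose k)) (h k (Suc n - k)))"
    by (simp add: Suc_diff_le)
  also have "\<dots> = h 0 (Suc n) + (\<Sum>k\<le>n. sc (of_nat (n choose Suc k)) (h (Suc k) (n - k)))"
    by (simp add: sum.atMost_Suc_shift del: sum.atMost_Suc)
  finally show ?thesis
    by (simp add: sum.atMost_Suc_shift V.scale_left_distrib V.scale_right_distrib sum.distrib
        del: sum.atMost_Suc)
qed

lemma sum_binomial_Suc_lessThan:
  "(\<Sum>i<n. sc (of_nat (n choose i)) (u i + u (Suc i))) + u n =
   (\<Sum>i<Suc n. sc (of_nat (Suc n choose i)) (u i))"
proof -
  have "(\<Sum>i<n. sc (of_nat (n choose i)) (u i)) + u n = (\<Sum>i<Suc n. sc (of_nat (n choose i)) (u i))"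
    by simp
  also have "\<dots> = u 0 + (\<Sum>i<n. sc (of_nat (n choose Suc i)) (u (Suc i)))"
    by (simp add: sum.lessThan_Suc_shift del: sum.lessThan_Suc)
  finally show ?thesis
    by (simp add: sum.lessThan_Suc_shift V.scale_left_distrib V.scale_right_distrib sum.distrib
        ac_simps del: sum.lessThan_Suc)
qed

lemma ad_one_ext_br:
  assumes "multilinear f" "multilinear g" "has_parity b g"
  shows "ad (p + q) (br p q b f g) n = (\<lambda>xs. \<Sum>k\<le>n. sc (of_nat (n choose k))
    (br (p + k) (q + (n - k)) b (ad p f k) (ad q g (n - k)) xs))"
proof (induction n)
  case (Suc n)
  show ?case
  proof
    fix xs
    define h where "h k j = br (p + k) (q + j) b (ad p f k) (ad q g j) xs" for k j
    have "ad (p + q) (br p q b f g) (Suc n) xs =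
        (\<Sum>k\<le>n. sc (of_nat (n choose k))
          (br (p + q + n) 1 False (br (p + k) (q + (n - k)) b (ad p f k) (ad q g (n - k))) one_op xs))"
      by (simp add: Suc.IH ext_br_sum_left ext_br_scale_left)
    also have "\<dots> = (\<Sum>k\<le>n. sc (of_nat (n choose k)) (h k (Suc (n - k)) + h (Suc k) (n - k)))"
    proof (intro sum.cong refl arg_cong[where f="sc _"])
      fix k assume "k \<in> {..n}"
      then have order: "p + q + n = (p + k) + (q + (n - k))" by simp
      have "br (p + q + n) 1 False (br (p + k) (q + (n - k)) b (ad p f k) (ad q g (n - k))) one_op xs =
          br (p + k) (q + (n - k) + 1) b (ad p f k) (br (q + (n - k)) 1 False (ad q g (n - k)) one_op) xs
          + br (p + k + 1) (q + (n - k)) b (br (p + k) 1 False (ad p f k) one_op) (ad q g (n - k)) xs"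
        unfolding order by (rule ext_br_one_derivation) (simp_all add: assms has_parity_ad_one)
      then show "br (p + q + n) 1 False (br (p + k) (q + (n - k)) b (ad p f k) (ad q g (n - k))) one_op xs =
          h k (Suc (n - k)) + h (Suc k) (n - k)"
        by (simp add: h_def)
    qed
    also have "\<dots> = (\<Sum>k\<le>Suc n. sc (of_nat (Suc n choose k)) (h k (Suc n - k)))"
      by (rule sum_binomial_Suc_atMost)
    finally show "ad (p + q) (br p q b f g) (Suc n) xs = (\<Sum>k\<le>Suc n. sc (of_nat (Suc n choose k))
        (br (p + k) (q + (Suc n - k)) b (ad p f k) (ad q g (Suc n - k)) xs))"
      by (simp add: h_def)
  qed
qed simp

lemma sum_ad_one_Suc:
  "(\<Sum>i<Suc n. ad (p + i + q) (br (p + i) q b (ad p f i) g) (Suc n - 1 - i) xs) =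
   br (p + q + n - 1) 1 False
     (\<lambda>ys. \<Sum>i<n. ad (p + i + q) (br (p + i) q b (ad p f i) g) (n - 1 - i) ys) one_op xs
   + br (p + n) q b (ad p f n) g xs"
proof -
  have "ad (p + i + q) (br (p + i) q b (ad p f i) g) (Suc n - 1 - i) xs =
      br (p + q + n - 1) 1 False (ad (p + i + q) (br (p + i) q b (ad p f i) g) (n - 1 - i)) one_op xs"
    if "i < n" for i
  proof -
    from that have "Suc n - 1 - i = Suc (n - 1 - i)" "p + i + q + (n - 1 - i) = p + q + n - 1"
      by simp_all
    then show ?thesis by (simp only: ad_one.simps(2))
  qed
  then show ?thesis
    by (simp add: ext_br_sum_left)
qed

lemma ext_br_one_binomial_step:
  assumes "multilinear f" "multilinear g" "has_parity b g"
  shows "br (p + q + n - 1) 1 False (\<lambda>ys. \<Sum>i<n. sc (of_nat (n choose (n - i)))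
      (br (p + i) (q + (n - 1 - i)) b (ad p f i) (ad q g (n - 1 - i)) ys)) one_op xs
    + br (p + n) q b (ad p f n) g xs =
    (\<Sum>i<Suc n. sc (of_nat (Suc n choose (Suc n - i)))
      (br (p + i) (q + (Suc n - 1 - i)) b (ad p f i) (ad q g (Suc n - 1 - i)) xs))"
proof -
  define u where "u i = br (p + i) (q + (n - i)) b (ad p f i) (ad q g (n - i)) xs" for i
  have "br (p + q + n - 1) 1 False (\<lambda>ys. \<Sum>i<n. sc (of_nat (n choose (n - i)))
      (br (p + i) (q + (n - 1 - i)) b (ad p f i) (ad q g (n - 1 - i)) ys)) one_op xs =
    (\<Sum>i<n. sc (of_nat (n choose i)) (u i + u (Suc i)))"
    unfolding ext_br_sum_left[OF finite_lessThan] ext_br_scale_left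
  proof (intro sum.cong refl)
    fix i assume "i \<in> {..<n}"
    then have i: "i < n" by simp
    then have order: "p + q + n - 1 = (p + i) + (q + (n - 1 - i))" by simp
    have "br (p + q + n - 1) 1 False (br (p + i) (q + (n - 1 - i)) b (ad p f i) (ad q g (n - 1 - i))) one_op xs =
        br (p + i) (q + (n - 1 - i) + 1) b (ad p f i) (br (q + (n - 1 - i)) 1 False (ad q g (n - 1 - i)) one_op) xs
        + br (p + i + 1) (q + (n - 1 - i)) b (br (p + i) 1 False (ad p f i) one_op) (ad q g (n - 1 - i)) xs"
      unfolding order by (rule ext_br_one_derivation) (simp_all add: assms has_parity_ad_one)
    also have "\<dots> = u i + u (Suc i)"
      using i unfolding u_def by (simp add: Suc_diff_Suc[OF i, symmetric])
    finally show "sc (of_nat (n choose (n - i)))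
        (br (p + q + n - 1) 1 False (br (p + i) (q + (n - 1 - i)) b (ad p f i) (ad q g (n - 1 - i))) one_op xs) =
      sc (of_nat (n choose i)) (u i + u (Suc i))"
      using i by (simp add: binomial_symmetric[symmetric])
  qed
  moreover have "(\<Sum>i<Suc n. sc (of_nat (Suc n choose (Suc n - i)))
      (br (p + i) (q + (Suc n - 1 - i)) b (ad p f i) (ad q g (Suc n - 1 - i)) xs)) =
    (\<Sum>i<Suc n. sc (of_nat (Suc n choose i)) (u i))"
    by (intro sum.cong refl) (simp add: u_def binomial_symmetric[symmetric])
  ultimately show ?thesis
    using sum_binomial_Suc_lessThan[of n u] by (simp add: u_def)
qed

lemma sum_ad_one_ext_br_binomial:
  assumes "multilinear f" "multilinear g" "has_parity b g"
  shows "(\<Sum>i<n. ad (p + i + q) (br (p + i) q b (ad p f i) g) (n - 1 - i) xs) =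
    (\<Sum>i<n. sc (of_nat (n choose (n - i))) (br (p + i) (q + (n - 1 - i)) b (ad p f i) (ad q g (n - 1 - i)) xs))"
proof (induction n arbitrary: xs)
  case (Suc n)
  then show ?case
    unfolding sum_ad_one_Suc by (simp only: ext_br_one_binomial_step[OF assms])
qed simp

lemma dot_op_ad_one:
  assumes "multilinear f" "multilinear g" "has_parity b g"
  shows "dot (p + n) q b (ad p f n) g = (\<lambda>xs.
    (\<Sum>i<n. ad (p + i + q) (br (p + i) q b (ad p f i) g) (n - 1 - i) xs) + ad (p + q - 1) (dot p q b f g) n xs)"
proof (induction n)
  case (Suc n)
  show ?case
  proof
    fix xs
    have "ad (p + q - 1) (dot p q b f g) (Suc n) xs =
        br (p + q + n - 1) 1 False (ad (p + q - 1) (dot p q b f g) n) one_op xs"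
      by (cases "p = 0") simp_all
    moreover have "dot (p + Suc n) q b (ad p f (Suc n)) g xs =
        br (p + n) q b (ad p f n) g xs + br (p + n + q - 1) 1 False (dot (p + n) q b (ad p f n) g) one_op xs"
      using dot_op_ext_br_one[OF multilinear_ad_one assms(2,3), OF assms(1)] by simp
    ultimately show "dot (p + Suc n) q b (ad p f (Suc n)) g xs =
        (\<Sum>i<Suc n. ad (p + i + q) (br (p + i) q b (ad p f i) g) (Suc n - 1 - i) xs)
        + ad (p + q - 1) (dot p q b f g) (Suc n) xs"
      unfolding sum_ad_one_Suc Suc.IH by (simp add: ext_br_add_left ac_simps)
  qed
qed (simp add: fun_eq_iff)

lemma is_hom_op_multilinear:
  assumes "is_hom_op sc G0 G1 p b f"
  shows "multilinear f"
  unfolding multilinear_def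
proof (intro allI conjI)
  fix as bs :: "'g list" and x y :: 'g and c :: 'k
  have "f (as @ (x + y) # bs) = f (as @ x # bs) + f (as @ y # bs) \<and>
      f (as @ sc c x # bs) = sc c (f (as @ x # bs))"
  proof (cases "length as + length bs + 1 = p")
    case True
    with assms have "Vector_Spaces.linear sc sc (\<lambda>x. f (as @ x # bs))"
      by (simp add: is_hom_op_def)
    then show ?thesis
      by (simp add: linear_iff_module_hom module_hom_iff)
  qed (use assms in \<open>simp add: is_hom_op_def\<close>)
  then show "f (as @ (x + y) # bs) = f (as @ x # bs) + f (as @ y # bs)"
    and "f (as @ sc c x # bs) = sc c (f (as @ x # bs))"
    by blast+
qed

lemma is_hom_op_has_parity:
  assumes "is_hom_op sc G0 G1 p b f"
  shows "has_parity b f"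
  unfolding has_parity_def
proof (intro allI impI)
  fix xs ps assume parities: "list_all2 (\<lambda>x c. x \<in> G c) xs ps"
  show "f xs \<in> G (foldr (\<lambda>a c. a \<noteq> c) ps b)"
  proof (cases "length xs = p")
    case True
    moreover have "length ps = p" "\<forall>i<p. xs ! i \<in> G (ps ! i)"
      using parities True by (auto simp: list_all2_lengthD[symmetric] dest: list_all2_nthD)
    ultimately show ?thesis
      using assms unfolding is_hom_op_def by blast
  qed (use assms in \<open>simp add: is_hom_op_def\<close>)
qed

end

theorem proposition4p5:
  fixes sc :: "'k::field_char_0 \<Rightarrow> 'g::ab_group_add \<Rightarrow> 'g"
    and G0 G1 :: "'g set" and brG :: "'g \<Rightarrow> 'g \<Rightarrow> 'g"
    and p q n :: nat and bA bB :: bool and f g :: "'g list \<Rightarrow> 'g"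
  assumes "lie_superalgebra sc G0 G1 brG"
    and "is_hom_op sc G0 G1 p bA f"
    and "is_hom_op sc G0 G1 q bB g"
    and "n \<ge> 1"
  shows
    "(ad_one sc G0 G1 brG (p + q) (ext_br sc G0 G1 brG p q bB f g) n =
       (\<lambda>xs. \<Sum>k\<le>n. sc (of_nat (n choose k))
          (ext_br sc G0 G1 brG (p + k) (q + (n - k)) bB
             (ad_one sc G0 G1 brG p f k) (ad_one sc G0 G1 brG q g (n - k)) xs))) \<and>
    (dot_op sc G0 G1 (p + n) q bB (ad_one sc G0 G1 brG p f n) g =
       (\<lambda>xs. (\<Sum>i<n. ad_one sc G0 G1 brG (p + i + q)
                 (ext_br sc G0 G1 brG (p + i) q bB (ad_one sc G0 G1 brG p f i) g) (n - 1 - i) xs)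
             + ad_one sc G0 G1 brG (p + q - 1) (dot_op sc G0 G1 p q bB f g) n xs)) \<and>
    ((\<lambda>xs. (\<Sum>i<n. ad_one sc G0 G1 brG (p + i + q)
                 (ext_br sc G0 G1 brG (p + i) q bB (ad_one sc G0 G1 brG p f i) g) (n - 1 - i) xs)
             + ad_one sc G0 G1 brG (p + q - 1) (dot_op sc G0 G1 p q bB f g) n xs) =
       (\<lambda>xs. (\<Sum>i<n. sc (of_nat (n choose (n - i)))
                 (ext_br sc G0 G1 brG (p + i) (q + (n - 1 - i)) bB
                    (ad_one sc G0 G1 brG p f i) (ad_one sc G0 G1 brG q g (n - 1 - i)) xs))
             + ad_one sc G0 G1 brG (p + q - 1) (dot_op sc G0 G1 p q bB f g) n xs))"
proof -
  interpret lie_super sc G0 G1 brG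
    using assms(1) by unfold_locales
  have f: "multilinear f" and g: "multilinear g" "has_parity bB g"
    using assms(2,3) by (simp_all add: is_hom_op_multilinear is_hom_op_has_parity)
  show ?thesis
    using ad_one_ext_br[OF f g] dot_op_ad_one[OF f g] sum_ad_one_ext_br_binomial[OF f g]
    by simp
qed
end
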